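(* For every $n\geq 2$, $\deg(\mathrm{nib}:\{0,1\}^n\to\{0,1\}^n)=3/2$.
   Context: For finite sets $X,Y$ and $f:X\to Y$, $\deg(f)=\frac{1}{|X|}\sum_{y\in Y}|f^{-1}(y)|^2$. For a binary word $w\in\{0,1\}^n$, $\mathrm{nib}(w)$ is obtained from $w$ by replacing the first (leftmost) occurrence of the factor $10$ in $w$ with $01$; if $w$ contains no factor $10$, then $\mathrm{nib}(w)=w$. *)

theory Defs
  imports Complex_Main
begin

definition deg :: "'a set \<Rightarrow> 'b set \<Rightarrow> ('a \<Rightarrow> 'b) \<Rightarrow> real" where
  "deg X Y f = (\<Sum>y\<in>Y. (real (card {x\<in>X. f x = y}))^2) / real (card X)"

text \<open>Binary words as lists of booleans (False = 0, True = 1), leftmost letter first.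
  nib replaces the first (leftmost) factor 10 by 01.\<close>
fun nib :: "bool list \<Rightarrow> bool list" where
  "nib (True # False # w) = False # True # w"
| "nib (a # w) = a # nib w"
| "nib [] = []"

definition words :: "nat \<Rightarrow> bool list set" where
  "words n = {w. length w = n}"

end

theory Submission
  imports Defs
begin

text \<open>A preimage of 1y under nib is 1x with nib x = y and x not starting with 0; a preimage
  of 0y is 0x with nib x = y or, if y = 1w, the word 10w. Hence the fibre sizes f(y) obey a
  recursion together with the counts g(y) of preimages not starting with 0, where g is
  0/1-valued and sums to 2^(m-1) over the words of length m \<ge> 1. The sum S(m) of f(y)^2 over
  words of length m then satisfies S(m+1) = S(m) + 3 * 2^(m-1) for m \<ge> 2, and S(2) = 6 gives
  S(n) = 3 * 2^(n-1).\<close>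

lemma length_nib [simp]: "length (nib w) = length w"
  by (induction w rule: nib.induct) auto

lemma finite_words: "finite (words n)"
  unfolding words_def using finite_lists_length_eq[of "UNIV :: bool set" n] by simp

lemma card_words: "card (words n) = 2 ^ n"
  unfolding words_def using card_lists_length_eq[of "UNIV :: bool set" n] by simp

lemma words_0: "words 0 = {[]}"
  unfolding words_def by auto

lemma sum_words_Suc:
  "(\<Sum>y\<in>words (Suc n). f y) = (\<Sum>w\<in>words n. f (True # w)) + (\<Sum>w\<in>words n. f (False # w))"
proof -
  have words_Suc_eq: "words (Suc n) = (#) True ` words n \<union> (#) False ` words n"
    unfolding words_def by (auto simp: length_Suc_conv image_iff)
  have "(\<Sum>y\<in>words (Suc n). f y) = sum f ((#) True ` words n) + sum f ((#) False ` words n)"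
    unfolding words_Suc_eq by (rule sum.union_disjoint) (auto simp: finite_words)
  then show ?thesis
    by (simp add: sum.reindex)
qed

fun starts_with :: "bool \<Rightarrow> bool list \<Rightarrow> bool" where
  "starts_with b (c # _) \<longleftrightarrow> c = b"
| "starts_with _ [] \<longleftrightarrow> False"

lemma nib_eq_Cons_True_iff:
  "nib x = True # y \<longleftrightarrow> (\<exists>x'. x = True # x' \<and> nib x' = y \<and> \<not> starts_with False x')"
  by (cases x rule: nib.cases) auto

lemma nib_eq_Cons_False_iff:
  "nib x = False # y \<longleftrightarrow>
     (\<exists>x'. x = False # x' \<and> nib x' = y) \<or> (\<exists>w. x = True # False # w \<and> y = True # w)"
  by (cases x rule: nib.cases) auto

lemma finite_nib_fiber: "finite (nib -` {y})"
  by (rule finite_subset[OF _ finite_words[of "length y"]]) (auto simp: words_def)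

definition fiber_size :: "bool list \<Rightarrow> nat" where
  "fiber_size y = card (nib -` {y})"

definition fiber_size_no_leading_zero :: "bool list \<Rightarrow> nat" where
  "fiber_size_no_leading_zero y = card {x \<in> nib -` {y}. \<not> starts_with False x}"

lemma fiber_size_Nil: "fiber_size [] = 1"
  and fiber_size_no_leading_zero_Nil: "fiber_size_no_leading_zero [] = 1"
proof -
  have "nib -` {[]} = {[]}"
    by (auto simp flip: length_0_conv)
  moreover have "{x \<in> nib -` {[]}. \<not> starts_with False x} = {[]}"
    by (auto simp flip: length_0_conv)
  ultimately show "fiber_size [] = 1" "fiber_size_no_leading_zero [] = 1"
    unfolding fiber_size_def fiber_size_no_leading_zero_def by simp_all
qed

lemma nib_fiber_Cons_True:
  "nib -` {True # y} = (#) True ` {x \<in> nib -` {y}. \<not> starts_with False x}"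
  by (auto simp: nib_eq_Cons_True_iff)

lemma fiber_size_Cons_True: "fiber_size (True # y) = fiber_size_no_leading_zero y"
  unfolding fiber_size_def fiber_size_no_leading_zero_def nib_fiber_Cons_True
  by (simp add: card_image)

lemma fiber_size_no_leading_zero_Cons_True:
  "fiber_size_no_leading_zero (True # y) = fiber_size_no_leading_zero y"
proof -
  have "{x \<in> nib -` {True # y}. \<not> starts_with False x} = nib -` {True # y}"
    by (auto simp: nib_eq_Cons_True_iff)
  then show ?thesis
    using fiber_size_Cons_True by (simp add: fiber_size_def fiber_size_no_leading_zero_def)
qed

lemma fiber_size_no_leading_zero_Cons_False:
  "fiber_size_no_leading_zero (False # y) = of_bool (starts_with True y)"
proof -
  have fiber: "{x \<in> nib -` {False # y}. \<not> starts_with False x} = {True # False # w | w. y = True # w}"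
    by (auto simp: nib_eq_Cons_False_iff)
  show ?thesis
    unfolding fiber_size_no_leading_zero_def fiber by (cases y) auto
qed

lemma fiber_size_Cons_False:
  "fiber_size (False # y) = fiber_size y + of_bool (starts_with True y)"
proof -
  have fiber: "nib -` {False # y} = (#) False ` nib -` {y} \<union> {True # False # w | w. y = True # w}"
    by (auto simp: nib_eq_Cons_False_iff)
  show ?thesis
    unfolding fiber_size_def fiber
    by (cases y) (auto simp: card_image card_insert_if finite_nib_fiber)
qed

lemma fiber_size_no_leading_zero_le_1: "fiber_size_no_leading_zero y \<le> 1"
proof (induction y)
  case (Cons b y)
  then show ?case
    by (cases b) (simp_all add: fiber_size_no_leading_zero_Cons_True
        fiber_size_no_leading_zero_Cons_False)
qed (simp add: fiber_size_no_leading_zero_Nil)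

lemma sum_starts_with_True: "(\<Sum>y\<in>words (Suc m). of_bool (starts_with True y) :: nat) = 2 ^ m"
  by (simp add: sum_words_Suc card_words)

lemma sum_fiber_size_no_leading_zero:
  "(\<Sum>y\<in>words (Suc m). fiber_size_no_leading_zero y) = 2 ^ m"
proof (induction m)
  case 0
  show ?case
    by (simp add: sum_words_Suc words_0 fiber_size_no_leading_zero_Cons_True
        fiber_size_no_leading_zero_Cons_False fiber_size_no_leading_zero_Nil)
next
  case (Suc m)
  then show ?case
    using sum_starts_with_True[of m]
    by (simp add: sum_words_Suc[of _ "Suc m"] fiber_size_no_leading_zero_Cons_True
        fiber_size_no_leading_zero_Cons_False)
qed

lemma sum_fiber_size_starts_with_True:
  "(\<Sum>y\<in>words (Suc m). fiber_size y * of_bool (starts_with True y)) =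
     (\<Sum>y\<in>words m. fiber_size_no_leading_zero y)"
  by (simp add: sum_words_Suc fiber_size_Cons_True)

lemma sum_fiber_size_sq_Suc:
  "(\<Sum>y\<in>words (Suc m). fiber_size y ^ 2) =
     (\<Sum>y\<in>words m. fiber_size y ^ 2) + (\<Sum>y\<in>words m. fiber_size_no_leading_zero y)
     + 2 * (\<Sum>y\<in>words m. fiber_size y * of_bool (starts_with True y))
     + (\<Sum>y\<in>words m. of_bool (starts_with True y))"
proof -
  have pointwise: "fiber_size (True # y) ^ 2 + fiber_size (False # y) ^ 2 =
      fiber_size y ^ 2 + fiber_size_no_leading_zero y
      + 2 * (fiber_size y * of_bool (starts_with True y)) + of_bool (starts_with True y)" for y
    using fiber_size_no_leading_zero_le_1[of y]
    by (cases "fiber_size_no_leading_zero y")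
      (auto simp: fiber_size_Cons_True fiber_size_Cons_False power2_eq_square algebra_simps)
  have "(\<Sum>y\<in>words (Suc m). fiber_size y ^ 2) =
      (\<Sum>y\<in>words m. fiber_size (True # y) ^ 2 + fiber_size (False # y) ^ 2)"
    by (simp add: sum_words_Suc sum.distrib)
  also have "\<dots> = (\<Sum>y\<in>words m. fiber_size y ^ 2 + fiber_size_no_leading_zero y
      + 2 * (fiber_size y * of_bool (starts_with True y)) + of_bool (starts_with True y))"
    by (simp only: pointwise)
  finally show ?thesis
    by (simp add: sum.distrib sum_distrib_left)
qed

lemma sum_fiber_size_sq: "(\<Sum>y\<in>words (Suc (Suc k)). fiber_size y ^ 2) = 3 * 2 ^ Suc k"
proof (induction k)
  case 0
  have "(\<Sum>y\<in>words 1. fiber_size y ^ 2) = 2"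
    using sum_fiber_size_sq_Suc[of 0]
    by (simp add: words_0 fiber_size_Nil fiber_size_no_leading_zero_Nil)
  then show ?case
    using sum_fiber_size_sq_Suc[of 1] sum_fiber_size_no_leading_zero[of 0]
      sum_fiber_size_starts_with_True[of 0] sum_starts_with_True[of 0]
    by (simp add: words_0 fiber_size_no_leading_zero_Nil)
next
  case (Suc k)
  then show ?case
    using sum_fiber_size_sq_Suc[of "Suc (Suc k)"] sum_fiber_size_no_leading_zero[of "Suc k"]
      sum_fiber_size_starts_with_True[of "Suc k"] sum_fiber_size_no_leading_zero[of k]
      sum_starts_with_True[of "Suc k"]
    by simp
qed

theorem mainTheorem12:
  fixes n :: nat
  assumes "n \<ge> 2"
  shows "deg (words n) (words n) nib = 3 / 2"
proof -
  obtain k where n: "n = Suc (Suc k)"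
    using assms by (metis add_2_eq_Suc le_Suc_ex)
  have "card {x \<in> words n. nib x = y} = fiber_size y" if "y \<in> words n" for y
  proof -
    have "{x \<in> words n. nib x = y} = nib -` {y}"
      using that by (auto simp: words_def)
    then show ?thesis
      by (simp add: fiber_size_def)
  qed
  then have "(\<Sum>y\<in>words n. real (card {x \<in> words n. nib x = y}) ^ 2)
      = real (\<Sum>y\<in>words n. fiber_size y ^ 2)"
    by simp
  also have "\<dots> = 3 * 2 ^ Suc k"
    unfolding n sum_fiber_size_sq by simp
  finally show ?thesis
    unfolding deg_def card_words n by simp
qed

end
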